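(* Let $\mathscr C$ be a small permutative category and let $X^{(1)},\dots,X^{(m)}\in\Phi(\mathscr C)$. Then: (1) there exists an $X^\bullet$-monotone injection $\phi\colon\mathbf m\times\omega\to\omega$; (2) if $\phi,\phi'\colon\mathbf m\times\omega\to\omega$ are two $X^\bullet$-monotone injections, then $\bigotimes_{i\in\omega}(\phi_*(X^\bullet))_i=\bigotimes_{i\in\omega}(\phi'_*(X^\bullet))_i$ in $\mathscr C$, and the morphism $[\phi',\phi]_{X^\bullet}\colon\phi_*(X^\bullet)\to\phi'_*(X^\bullet)$ in $\Phi(\mathscr C)$ is given by the identity morphism of this object of $\mathscr C$.
   Context: A permutative category is a symmetric monoidal category $(\mathscr C,\otimes,\mathbf 1,\tau)$ whose associativity and unit isomorphisms are identities; for $\sigma\in\Sigma_K$, the coherence isomorphism $\bigotimes_{i=1}^KA_i\to\bigotimes_{i=1}^KA_{\sigma^{-1}(i)}$ is the composite of maps $\mathrm{id}\otimes\tau\otimes\mathrm{id}$ along a decomposition of $\sigma$ into adjacent transpositions. Let $\omega=\{1,2,\dots\}$, $\mathbf m=\{1,\dots,m\}$, $\mathcal M$ the monoid of injections $\omega\to\omega$. $\Phi(\mathscr C)$ is the parsummable category whose objects are sequences $X=(X_1,X_2,\dots)$ of objects of $\mathscr C$ with $X_i=\mathbf 1$ for almost all $i$; $\mathrm{Hom}(X,Y)=\mathrm{Hom}_{\mathscr C}(\bigotimes_{i\in\omega}X_i,\bigotimes_{i\in\omega}Y_i)$ (ordered tensor product of non-unit entries; a morphism is a morphism of $\mathscr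 C$ together with its source and target); $(u_*X)_i=X_j$ if $i=u(j)$ and $\mathbf 1$ if $i\notin\mathrm{im}(u)$; the structure isomorphism $[u,1]_X\colon X\to u_*X$ is the coherence isomorphism associated to any $\sigma\in\Sigma_K$ with $\sigma(i)=u(i)$ for all $i\le K$ with $X_i\ne\mathbf1$, where $X_i=\mathbf 1=(u_*X)_i$ for $i>K$, and $[v,u]_X=[v,1]_X\circ[u,1]_X^{-1}$; $\mathrm{supp}(X)=\{i:X_i\ne\mathbf 1\}$; the sum of disjointly supported $X,Y$ has entries $X_i$ for $i\in\mathrm{supp}(X)$ and $Y_i$ otherwise, and sums of morphisms are $f\otimes g$ conjugated by the coherence isomorphisms rearranging entries. For a finite set $A$, injections $\phi,\phi'\colon A\times\omega\to\omega$ and a family $(X^{(a)})_{a\in A}$ of objects, $\phi_*(X^\bullet)=\sum_a\phi(a,-)_*(X^{(a)})$ and $[\phi',\phi]_{X^\bullet}=\sum_a[\phi'(a,-),\phi(a,-)]_{X^{(a)}}$. An injection $\phi\colon\mathbf m\times\omega\to\omega$ is $X^\bullet$-monotone if $\phi(i,j)<\phi(i',j')$ for all $i,i'\in\mathbf m$, $j,j'\in\omega$ with $(i,j)$ lexicographically smaller than $(i',j')$ and $X^{(i)}_j\ne\mathbf 1\ne X^{(i')}_{j'}$. *)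

theory Defs
  imports Main
begin

record ('o, 'm) pcat =
  ob   :: "'o set"
  mor  :: "'m set"
  dm   :: "'m \<Rightarrow> 'o"
  cd   :: "'m \<Rightarrow> 'o"
  cmp  :: "'m \<Rightarrow> 'm \<Rightarrow> 'm"   (* cmp g f = g \<circ> f *)
  idm  :: "'o \<Rightarrow> 'm"
  tn   :: "'o \<Rightarrow> 'o \<Rightarrow> 'o"
  tnm  :: "'m \<Rightarrow> 'm \<Rightarrow> 'm"
  un   :: "'o"
  sy   :: "'o \<Rightarrow> 'o \<Rightarrow> 'm"   (* symmetry tau_{A,B} : A (x) B \<rightarrow> B (x) A *)

definition permutative_cat :: "('o, 'm) pcat \<Rightarrow> bool" where
  "permutative_cat C \<longleftrightarrow>
     \<comment> \<open>category\<close>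
     (\<forall>f\<in>mor C. dm C f \<in> ob C \<and> cd C f \<in> ob C) \<and>
     (\<forall>A\<in>ob C. idm C A \<in> mor C \<and> dm C (idm C A) = A \<and> cd C (idm C A) = A) \<and>
     (\<forall>f\<in>mor C. \<forall>g\<in>mor C. dm C g = cd C f \<longrightarrow>
        cmp C g f \<in> mor C \<and> dm C (cmp C g f) = dm C f \<and> cd C (cmp C g f) = cd C g) \<and>
     (\<forall>f\<in>mor C. cmp C (idm C (cd C f)) f = f \<and> cmp C f (idm C (dm C f)) = f) \<and>
     (\<forall>f\<in>mor C. \<forall>g\<in>mor C. \<forall>h\<in>mor C. dm C g = cd C f \<longrightarrow> dm C h = cd C g \<longrightarrow>
        cmp C h (cmp C g f) = cmp C (cmp C h g) f) \<and>
     \<comment> \<open>tensor is a bifunctor\<close>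
     (\<forall>A\<in>ob C. \<forall>B\<in>ob C. tn C A B \<in> ob C) \<and>
     (\<forall>f\<in>mor C. \<forall>g\<in>mor C. tnm C f g \<in> mor C \<and>
        dm C (tnm C f g) = tn C (dm C f) (dm C g) \<and> cd C (tnm C f g) = tn C (cd C f) (cd C g)) \<and>
     (\<forall>A\<in>ob C. \<forall>B\<in>ob C. tnm C (idm C A) (idm C B) = idm C (tn C A B)) \<and>
     (\<forall>f\<in>mor C. \<forall>g\<in>mor C. \<forall>f'\<in>mor C. \<forall>g'\<in>mor C.
        dm C g = cd C f \<longrightarrow> dm C g' = cd C f' \<longrightarrow>
        tnm C (cmp C g f) (cmp C g' f') = cmp C (tnm C g g') (tnm C f f')) \<and>
     \<comment> \<open>strict associativity and unit\<close>
     un C \<in> ob C \<and>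
     (\<forall>A\<in>ob C. tn C (un C) A = A \<and> tn C A (un C) = A) \<and>
     (\<forall>A\<in>ob C. \<forall>B\<in>ob C. \<forall>D\<in>ob C. tn C (tn C A B) D = tn C A (tn C B D)) \<and>
     (\<forall>f\<in>mor C. tnm C (idm C (un C)) f = f \<and> tnm C f (idm C (un C)) = f) \<and>
     (\<forall>f\<in>mor C. \<forall>g\<in>mor C. \<forall>h\<in>mor C. tnm C (tnm C f g) h = tnm C f (tnm C g h)) \<and>
     \<comment> \<open>symmetry\<close>
     (\<forall>A\<in>ob C. \<forall>B\<in>ob C. sy C A B \<in> mor C \<and> dm C (sy C A B) = tn C A B \<and> cd C (sy C A B) = tn C B A) \<and>
     (\<forall>f\<in>mor C. \<forall>g\<in>mor C.
        cmp C (sy C (cd C f) (cd C g)) (tnm C f g) = cmp C (tnm C g f) (sy C (dm C f) (dm C g))) \<and>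
     (\<forall>A\<in>ob C. \<forall>B\<in>ob C. cmp C (sy C B A) (sy C A B) = idm C (tn C A B)) \<and>
     (\<forall>A\<in>ob C. sy C A (un C) = idm C A) \<and>
     (\<forall>A\<in>ob C. \<forall>B\<in>ob C. \<forall>D\<in>ob C.
        sy C A (tn C B D) = cmp C (tnm C (idm C B) (sy C A D)) (tnm C (sy C A B) (idm C D)))"

section \<open>Coherence isomorphisms (positions are 0-based: 0, ..., K-1)\<close>

definition tens_list :: "('o, 'm) pcat \<Rightarrow> 'o list \<Rightarrow> 'o" where
  "tens_list C L = foldr (tn C) L (un C)"

definition adjswap :: "nat \<Rightarrow> nat \<Rightarrow> nat" where
  "adjswap j i = (if i = j then Suc j else if i = Suc j then j else i)"

definition swap_list :: "'o list \<Rightarrow> nat \<Rightarrow> 'o list" where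
  "swap_list L j = L[j := L ! Suc j, Suc j := L ! j]"

definition step_mor :: "('o, 'm) pcat \<Rightarrow> 'o list \<Rightarrow> nat \<Rightarrow> 'm" where
  "step_mor C L j = tnm C (tnm C (idm C (tens_list C (take j L))) (sy C (L ! j) (L ! Suc j)))
                          (idm C (tens_list C (drop (Suc (Suc j)) L)))"

fun steps_mor :: "('o, 'm) pcat \<Rightarrow> 'o list \<Rightarrow> nat list \<Rightarrow> 'm" where
  "steps_mor C L [] = idm C (tens_list C L)"
| "steps_mor C L (j # js) = cmp C (steps_mor C (swap_list L j) js) (step_mor C L j)"

text \<open>After the steps js, the entry at position i is the original entry at position perm_of js i.\<close>
fun perm_of :: "nat list \<Rightarrow> nat \<Rightarrow> nat" where
  "perm_of [] = id"
| "perm_of (j # js) = adjswap j \<circ> perm_of js"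

text \<open>Coherence isomorphism A_0 (x) ... (x) A_{K-1} \<rightarrow> A_{sigma^-1 0} (x) ... (x) A_{sigma^-1 (K-1)}
  associated to a permutation sigma of {0..<K}, as the composite along a decomposition of sigma
  into adjacent transpositions (independence of the decomposition is the coherence theorem).\<close>
definition coh :: "('o, 'm) pcat \<Rightarrow> 'o list \<Rightarrow> (nat \<Rightarrow> nat) \<Rightarrow> 'm" where
  "coh C L \<sigma> = (SOME f. \<exists>js. (\<forall>j\<in>set js. Suc j < length L) \<and>
        (\<forall>i<length L. \<sigma> (perm_of js i) = i) \<and> f = steps_mor C L js)"

definition inv_mor :: "('o, 'm) pcat \<Rightarrow> 'm \<Rightarrow> 'm" where
  "inv_mor C f = (SOME g. g \<in> mor C \<and> dm C g = cd C f \<and> cd C g = dm C f \<and>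
        cmp C g f = idm C (dm C f) \<and> cmp C f g = idm C (cd C f))"

section \<open>The parsummable category Phi(C) (omega is rendered as nat, 0-based)\<close>

definition supp :: "('o, 'm) pcat \<Rightarrow> (nat \<Rightarrow> 'o) \<Rightarrow> nat set" where
  "supp C X = {i. X i \<noteq> un C}"

definition Phi_obj :: "('o, 'm) pcat \<Rightarrow> (nat \<Rightarrow> 'o) \<Rightarrow> bool" where
  "Phi_obj C X \<longleftrightarrow> (\<forall>i. X i \<in> ob C) \<and> finite (supp C X)"

definition bigtens :: "('o, 'm) pcat \<Rightarrow> (nat \<Rightarrow> 'o) \<Rightarrow> 'o" where
  "bigtens C X = tens_list C (map X (sorted_list_of_set (supp C X)))"

definition push :: "('o, 'm) pcat \<Rightarrow> (nat \<Rightarrow> nat) \<Rightarrow> (nat \<Rightarrow> 'o) \<Rightarrow> nat \<Rightarrow> 'o" where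
  "push C u X i = (if i \<in> range u then X (inv u i) else un C)"

definition struct_iso :: "('o, 'm) pcat \<Rightarrow> (nat \<Rightarrow> nat) \<Rightarrow> (nat \<Rightarrow> 'o) \<Rightarrow> 'm" where
  "struct_iso C u X = (SOME f. \<exists>K \<sigma>. bij_betw \<sigma> {..<K} {..<K} \<and>
        (\<forall>i<K. X i \<noteq> un C \<longrightarrow> \<sigma> i = u i) \<and>
        (\<forall>i\<ge>K. X i = un C \<and> push C u X i = un C) \<and>
        f = coh C (map X [0..<K]) \<sigma>)"

definition gen_iso :: "('o, 'm) pcat \<Rightarrow> (nat \<Rightarrow> nat) \<Rightarrow> (nat \<Rightarrow> nat) \<Rightarrow> (nat \<Rightarrow> 'o) \<Rightarrow> 'm" where
  "gen_iso C v u X = cmp C (struct_iso C v X) (inv_mor C (struct_iso C u X))"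

definition osum :: "('o, 'm) pcat \<Rightarrow> (nat \<Rightarrow> 'o) \<Rightarrow> (nat \<Rightarrow> 'o) \<Rightarrow> nat \<Rightarrow> 'o" where
  "osum C X Y i = (if i \<in> supp C X then X i else Y i)"

text \<open>Coherence isomorphism rearranging the entries of X+Y into (entries of X)(entries of Y).\<close>
definition rearr :: "('o, 'm) pcat \<Rightarrow> (nat \<Rightarrow> 'o) \<Rightarrow> (nat \<Rightarrow> 'o) \<Rightarrow> 'm" where
  "rearr C X Y =
     (let S = sorted_list_of_set (supp C X \<union> supp C Y);
          \<sigma> = (\<lambda>p. if S ! p \<in> supp C X then card {k\<in>supp C X. k < S ! p}
                    else card (supp C X) + card {k\<in>supp C Y. k < S ! p})
      in coh C (map (osum C X Y) S) \<sigma>)"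

definition msum :: "('o, 'm) pcat \<Rightarrow> (nat \<Rightarrow> 'o) \<Rightarrow> (nat \<Rightarrow> 'o) \<Rightarrow> (nat \<Rightarrow> 'o) \<Rightarrow> (nat \<Rightarrow> 'o)
                      \<Rightarrow> 'm \<Rightarrow> 'm \<Rightarrow> 'm" where
  "msum C X Y X' Y' f g = cmp C (inv_mor C (rearr C X' Y')) (cmp C (tnm C f g) (rearr C X Y))"

definition osum_list :: "('o, 'm) pcat \<Rightarrow> (nat \<Rightarrow> 'o) list \<Rightarrow> nat \<Rightarrow> 'o" where
  "osum_list C Xs = foldr (osum C) Xs (\<lambda>_. un C)"

fun msum_list :: "('o, 'm) pcat \<Rightarrow> ((nat \<Rightarrow> 'o) \<times> (nat \<Rightarrow> 'o) \<times> 'm) list \<Rightarrow> 'm" where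
  "msum_list C [] = idm C (un C)"
| "msum_list C ((X, X', f) # rest) =
     msum C X (osum_list C (map fst rest)) X' (osum_list C (map (fst \<circ> snd) rest)) f (msum_list C rest)"

text \<open>phi_*(X^\<bullet>) for phi : m \<times> omega \<rightarrow> omega (curried, m = {0..<m}).\<close>
definition push_fam :: "('o, 'm) pcat \<Rightarrow> nat \<Rightarrow> (nat \<Rightarrow> nat \<Rightarrow> nat) \<Rightarrow> (nat \<Rightarrow> nat \<Rightarrow> 'o) \<Rightarrow> nat \<Rightarrow> 'o" where
  "push_fam C m \<phi> Xs = osum_list C (map (\<lambda>a. push C (\<phi> a) (Xs a)) [0..<m])"

definition gen_iso_fam :: "('o, 'm) pcat \<Rightarrow> nat \<Rightarrow> (nat \<Rightarrow> nat \<Rightarrow> nat) \<Rightarrow> (nat \<Rightarrow> nat \<Rightarrow> nat)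
                            \<Rightarrow> (nat \<Rightarrow> nat \<Rightarrow> 'o) \<Rightarrow> 'm" where
  "gen_iso_fam C m \<phi>' \<phi> Xs =
     msum_list C (map (\<lambda>a. (push C (\<phi> a) (Xs a), push C (\<phi>' a) (Xs a), gen_iso C (\<phi>' a) (\<phi> a) (Xs a)))
                      [0..<m])"

definition inj_fam :: "nat \<Rightarrow> (nat \<Rightarrow> nat \<Rightarrow> nat) \<Rightarrow> bool" where
  "inj_fam m \<phi> \<longleftrightarrow> inj_on (\<lambda>(a, j). \<phi> a j) ({..<m} \<times> UNIV)"

definition X_monotone :: "('o, 'm) pcat \<Rightarrow> nat \<Rightarrow> (nat \<Rightarrow> nat \<Rightarrow> 'o) \<Rightarrow> (nat \<Rightarrow> nat \<Rightarrow> nat) \<Rightarrow> bool" where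
  "X_monotone C m Xs \<phi> \<longleftrightarrow>
     (\<forall>i<m. \<forall>i'<m. \<forall>j j'. (i < i' \<or> (i = i' \<and> j < j')) \<and> Xs i j \<noteq> un C \<and> Xs i' j' \<noteq> un C
        \<longrightarrow> \<phi> i j < \<phi> i' j')"

end

theory Submission
  imports Defs
begin

text \<open>Both monotone injections place the non-unit entries of the objects \<open>X\<^sup>(\<^sup>a\<^sup>)\<close> in the same,
  lexicographic, relative order, so \<open>\<phi>\<^sub>*(X\<^sup>\<bullet>)\<close> and \<open>\<phi>'\<^sub>*(X\<^sup>\<bullet>)\<close> have the same ordered
  tensor product. Every coherence isomorphism entering \<open>[\<phi>',\<phi>]\<close> (the structure isomorphisms of
  the summands and the rearrangements inside the sums) belongs to a permutation that keeps the
  non-unit entries in order, and such a coherence isomorphism is an identity: any composite of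
  adjacent symmetries equals a normal form that brings one entry at a time to the front, and when
  the order of the non-unit entries is kept, each of these moves passes only units. A monotone
  injection exists because the supports are finite: for a common bound \<open>B\<close> send \<open>(a, j)\<close> with
  \<open>j < B\<close> to \<open>a B + j\<close>.\<close>

section \<open>Permutative categories\<close>

locale permutative =
  fixes C :: "('o, 'm) pcat"
  assumes permutative_cat: "permutative_cat C"
begin

lemmas pcat_laws = permutative_cat[unfolded permutative_cat_def]

lemma idm_mor[simp]: "A \<in> ob C \<Longrightarrow> idm C A \<in> mor C"
  and dm_idm[simp]: "A \<in> ob C \<Longrightarrow> dm C (idm C A) = A"
  and cd_idm[simp]: "A \<in> ob C \<Longrightarrow> cd C (idm C A) = A"
  using pcat_laws by auto

lemma cmp_mor[simp]: "f \<in> mor C \<Longrightarrow> g \<in> mor C \<Longrightarrow> dm C g = cd C f \<Longrightarrow> cmp C g f \<in> mor C"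
  and dm_cmp[simp]: "f \<in> mor C \<Longrightarrow> g \<in> mor C \<Longrightarrow> dm C g = cd C f \<Longrightarrow> dm C (cmp C g f) = dm C f"
  and cd_cmp[simp]: "f \<in> mor C \<Longrightarrow> g \<in> mor C \<Longrightarrow> dm C g = cd C f \<Longrightarrow> cd C (cmp C g f) = cd C g"
  using pcat_laws by auto

lemma cmp_idm_left[simp]: "f \<in> mor C \<Longrightarrow> cd C f = A \<Longrightarrow> cmp C (idm C A) f = f"
  and cmp_idm_right[simp]: "f \<in> mor C \<Longrightarrow> dm C f = A \<Longrightarrow> cmp C f (idm C A) = f"
  using pcat_laws by auto

lemma cmp_assoc:
  "f \<in> mor C \<Longrightarrow> g \<in> mor C \<Longrightarrow> h \<in> mor C \<Longrightarrow> dm C g = cd C f \<Longrightarrow> dm C h = cd C g \<Longrightarrow>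
   cmp C h (cmp C g f) = cmp C (cmp C h g) f"
  using pcat_laws by auto

lemma tn_ob[simp]: "A \<in> ob C \<Longrightarrow> B \<in> ob C \<Longrightarrow> tn C A B \<in> ob C"
  using pcat_laws by auto

lemma tnm_mor[simp]: "f \<in> mor C \<Longrightarrow> g \<in> mor C \<Longrightarrow> tnm C f g \<in> mor C"
  and dm_tnm[simp]: "f \<in> mor C \<Longrightarrow> g \<in> mor C \<Longrightarrow> dm C (tnm C f g) = tn C (dm C f) (dm C g)"
  and cd_tnm[simp]: "f \<in> mor C \<Longrightarrow> g \<in> mor C \<Longrightarrow> cd C (tnm C f g) = tn C (cd C f) (cd C g)"
  using pcat_laws by auto

lemma tnm_idm[simp]: "A \<in> ob C \<Longrightarrow> B \<in> ob C \<Longrightarrow> tnm C (idm C A) (idm C B) = idm C (tn C A B)"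
  using pcat_laws by auto

lemma interchange:
  "f \<in> mor C \<Longrightarrow> g \<in> mor C \<Longrightarrow> f' \<in> mor C \<Longrightarrow> g' \<in> mor C \<Longrightarrow>
   dm C g = cd C f \<Longrightarrow> dm C g' = cd C f' \<Longrightarrow>
   tnm C (cmp C g f) (cmp C g' f') = cmp C (tnm C g g') (tnm C f f')"
  using pcat_laws by auto

lemma un_ob[simp]: "un C \<in> ob C"
  using pcat_laws by auto

lemma tn_un[simp]: "A \<in> ob C \<Longrightarrow> tn C (un C) A = A" "A \<in> ob C \<Longrightarrow> tn C A (un C) = A"
  using pcat_laws by auto

lemma tn_assoc[simp]: "A \<in> ob C \<Longrightarrow> B \<in> ob C \<Longrightarrow> D \<in> ob C \<Longrightarrow> tn C (tn C A B) D = tn C A (tn C B D)"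
  using pcat_laws by auto

lemma tnm_assoc[simp]: "f \<in> mor C \<Longrightarrow> g \<in> mor C \<Longrightarrow> h \<in> mor C \<Longrightarrow> tnm C (tnm C f g) h = tnm C f (tnm C g h)"
  using pcat_laws by auto

lemma sy_mor[simp]: "A \<in> ob C \<Longrightarrow> B \<in> ob C \<Longrightarrow> sy C A B \<in> mor C"
  and dm_sy[simp]: "A \<in> ob C \<Longrightarrow> B \<in> ob C \<Longrightarrow> dm C (sy C A B) = tn C A B"
  and cd_sy[simp]: "A \<in> ob C \<Longrightarrow> B \<in> ob C \<Longrightarrow> cd C (sy C A B) = tn C B A"
  using pcat_laws by auto

lemma sy_natural:
  "f \<in> mor C \<Longrightarrow> g \<in> mor C \<Longrightarrow>
   cmp C (sy C (cd C f) (cd C g)) (tnm C f g) = cmp C (tnm C g f) (sy C (dm C f) (dm C g))"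
  using pcat_laws by auto

lemma sy_sy: "A \<in> ob C \<Longrightarrow> B \<in> ob C \<Longrightarrow> cmp C (sy C B A) (sy C A B) = idm C (tn C A B)"
  using pcat_laws by auto

lemma sy_un[simp]: "A \<in> ob C \<Longrightarrow> sy C A (un C) = idm C A"
  using pcat_laws by auto

lemma sy_tn_right:
  "A \<in> ob C \<Longrightarrow> B \<in> ob C \<Longrightarrow> D \<in> ob C \<Longrightarrow>
   sy C A (tn C B D) = cmp C (tnm C (idm C B) (sy C A D)) (tnm C (sy C A B) (idm C D))"
  using pcat_laws by auto

lemma un_sy[simp]: "A \<in> ob C \<Longrightarrow> sy C (un C) A = idm C A"
  using sy_sy[of A "un C"] by simp

text \<open>The second hexagon identity follows from the first one by inverting both sides.\<close>
lemma sy_tn_left: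
  assumes ob: "A \<in> ob C" "B \<in> ob C" "D \<in> ob C"
  shows "sy C (tn C A B) D = cmp C (tnm C (sy C A D) (idm C B)) (tnm C (idm C A) (sy C B D))"
proof -
  let ?h = "cmp C (tnm C (sy C A D) (idm C B)) (tnm C (idm C A) (sy C B D))"
  have inv1: "cmp C (tnm C (idm C A) (sy C B D)) (tnm C (idm C A) (sy C D B)) = idm C (tn C A (tn C D B))"
    using interchange[of "idm C A" "idm C A" "sy C D B" "sy C B D", symmetric] sy_sy[of D B] ob by simp
  have inv2: "cmp C (tnm C (sy C A D) (idm C B)) (tnm C (sy C D A) (idm C B)) = idm C (tn C D (tn C A B))"
    using interchange[of "sy C D A" "sy C A D" "idm C B" "idm C B", symmetric] sy_sy[of D A] ob by simp
  have "cmp C ?h (sy C D (tn C A B)) = cmp C (tnm C (sy C A D) (idm C B))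
      (cmp C (cmp C (tnm C (idm C A) (sy C B D)) (tnm C (idm C A) (sy C D B))) (tnm C (sy C D A) (idm C B)))"
    unfolding sy_tn_right[OF ob(3,1,2)] using ob by (simp add: cmp_assoc)
  also have "\<dots> = idm C (tn C D (tn C A B))"
    unfolding inv1 using ob inv2 by simp
  finally have "cmp C ?h (sy C D (tn C A B)) = idm C (tn C D (tn C A B))" .
  then have "sy C (tn C A B) D = cmp C (cmp C ?h (sy C D (tn C A B))) (sy C (tn C A B) D)"
    using ob by simp
  also have "\<dots> = ?h"
    using ob sy_sy[of "tn C A B" D] by (simp add: cmp_assoc[symmetric])
  finally show ?thesis .
qed

lemma tens_list_Nil[simp]: "tens_list C [] = un C"
  and tens_list_Cons[simp]: "tens_list C (x # xs) = tn C x (tens_list C xs)"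
  by (simp_all add: tens_list_def)

lemma tens_list_ob[simp]: "set L \<subseteq> ob C \<Longrightarrow> tens_list C L \<in> ob C"
  by (induction L) auto

lemma tens_list_append[simp]:
  "set xs \<subseteq> ob C \<Longrightarrow> set ys \<subseteq> ob C \<Longrightarrow> tens_list C (xs @ ys) = tn C (tens_list C xs) (tens_list C ys)"
  by (induction xs) auto

lemma tens_list_units: "\<forall>x\<in>set xs. x = un C \<Longrightarrow> tens_list C xs = un C"
  by (induction xs) auto

lemma ob_take[simp]: "set L \<subseteq> ob C \<Longrightarrow> set (take k L) \<subseteq> ob C"
  and ob_drop[simp]: "set L \<subseteq> ob C \<Longrightarrow> set (drop k L) \<subseteq> ob C"
  by (meson order_trans set_take_subset set_drop_subset)+

lemma ob_nth[simp]: "set L \<subseteq> ob C \<Longrightarrow> i < length L \<Longrightarrow> L ! i \<in> ob C"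
  by (meson nth_mem subsetD)

end

section \<open>Coherence isomorphisms of order-preserving permutations\<close>

definition del_nth :: "nat \<Rightarrow> 'a list \<Rightarrow> 'a list" where
  "del_nth k L = take k L @ drop (Suc k) L"

definition shift_down :: "nat \<Rightarrow> nat \<Rightarrow> nat" where
  "shift_down k x = (if x < k then x else x - 1)"

definition perm_lt :: "nat \<Rightarrow> (nat \<Rightarrow> nat) \<Rightarrow> bool" where
  "perm_lt n \<pi> \<longleftrightarrow> inj_on \<pi> {..<n} \<and> \<pi> ` {..<n} \<subseteq> {..<n}"

text \<open>If \<open>\<pi>\<close> lists the positions of a list \<open>L\<close> in a new order, \<open>perm_tail \<pi>\<close> lists the
  remaining ones in the same order, as positions of \<open>del_nth (\<pi> 0) L\<close>.\<close>
definition perm_tail :: "(nat \<Rightarrow> nat) \<Rightarrow> nat \<Rightarrow> nat" where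
  "perm_tail \<pi> i = shift_down (\<pi> 0) (\<pi> (Suc i))"

definition keeps_order :: "'a \<Rightarrow> 'a list \<Rightarrow> nat \<Rightarrow> (nat \<Rightarrow> nat) \<Rightarrow> bool" where
  "keeps_order e L n \<pi> \<longleftrightarrow> (\<forall>i i'. i < i' \<longrightarrow> i' < n \<longrightarrow> L ! \<pi> i \<noteq> e \<longrightarrow> L ! \<pi> i' \<noteq> e \<longrightarrow> \<pi> i < \<pi> i')"

definition move_front :: "('o, 'm) pcat \<Rightarrow> 'o list \<Rightarrow> nat \<Rightarrow> 'm" where
  "move_front C L k =
     tnm C (sy C (tens_list C (take k L)) (L ! k)) (idm C (tens_list C (drop (Suc k) L)))"

text \<open>A normal form for the composites of adjacent symmetries: move the entry at position \<open>\<pi> 0\<close>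
  to the front, then rearrange the remaining entries recursively. Like \<^const>\<open>steps_mor\<close>, it puts
  \<open>L ! \<pi> i\<close> at position \<open>i\<close>.\<close>
fun canon_mor :: "('o, 'm) pcat \<Rightarrow> nat \<Rightarrow> 'o list \<Rightarrow> (nat \<Rightarrow> nat) \<Rightarrow> 'm" where
  "canon_mor C 0 L \<pi> = idm C (tens_list C L)"
| "canon_mor C (Suc n) L \<pi> =
     cmp C (tnm C (idm C (L ! \<pi> 0)) (canon_mor C n (del_nth (\<pi> 0) L) (perm_tail \<pi>)))
       (move_front C L (\<pi> 0))"

lemma split_list_at: "k < length L \<Longrightarrow> \<exists>us d vs. L = us @ d # vs \<and> length us = k"
  using id_take_nth_drop[of k L] by (intro exI[of _ "take k L"] exI[of _ "L ! k"] exI[of _ "drop (Suc k) L"]) simp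

lemma split_list_at_pair: "Suc j < length L \<Longrightarrow> \<exists>xs a b ys. L = xs @ a # b # ys \<and> length xs = j"
  using id_take_nth_drop[of j L] Cons_nth_drop_Suc[of "Suc j" L]
  by (intro exI[of _ "take j L"] exI[of _ "L ! j"] exI[of _ "L ! Suc j"] exI[of _ "drop (Suc (Suc j)) L"]) simp

lemma length_del_nth[simp]: "k < length L \<Longrightarrow> length (del_nth k L) = length L - 1"
  unfolding del_nth_def by simp

lemma nth_del_nth:
  "k < length L \<Longrightarrow> i < length L - 1 \<Longrightarrow> del_nth k L ! i = L ! (if i < k then i else Suc i)"
  unfolding del_nth_def by (auto simp: nth_append min_def)

lemma nth_del_nth_shift_down:
  "k < length L \<Longrightarrow> x < length L \<Longrightarrow> x \<noteq> k \<Longrightarrow> del_nth k L ! shift_down k x = L ! x"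
  unfolding del_nth_def shift_down_def by (auto simp: nth_append min_def)

lemma del_nth_append[simp]: "del_nth (length xs) (xs @ d # ys) = xs @ ys"
  by (simp add: del_nth_def)

lemma length_swap_list[simp]: "length (swap_list L j) = length L"
  by (simp add: swap_list_def)

lemma swap_list_append[simp]: "swap_list (xs @ a # b # ys) (length xs) = xs @ b # a # ys"
  by (simp add: swap_list_def list_update_append nth_append)

lemma nth_swap_list: "Suc j < length L \<Longrightarrow> k < length L \<Longrightarrow> swap_list L j ! k = L ! adjswap j k"
  by (simp add: swap_list_def adjswap_def nth_list_update)

lemma del_nth_append_Suc[simp]: "del_nth (Suc (length xs)) (xs @ a # b # ys) = xs @ a # ys"
  by (simp add: del_nth_def)

lemma del_nth_swap_list_near:
  assumes "Suc j < length L" "k = j \<or> k = Suc j"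
  shows "del_nth k (swap_list L j) = del_nth (adjswap j k) L"
proof -
  obtain xs a b ys where "L = xs @ a # b # ys" "length xs = j"
    using split_list_at_pair[OF assms(1)] by blast
  with assms(2) show ?thesis by (auto simp: adjswap_def)
qed

lemma del_nth_swap_list_far:
  assumes "Suc j < length L" "k < length L" "k \<noteq> j" "k \<noteq> Suc j"
  shows "del_nth k (swap_list L j) = swap_list (del_nth k L) (shift_down k j)"
proof (rule nth_equalityI)
  show "length (del_nth k (swap_list L j)) = length (swap_list (del_nth k L) (shift_down k j))"
    using assms by simp
  let ?j = "shift_down k j"
  fix i assume "i < length (del_nth k (swap_list L j))"
  then have i: "i < length L - 1" using assms by simp
  have j: "Suc ?j < length L - 1" using assms unfolding shift_down_def by auto
  then have ji: "adjswap ?j i < length L - 1" using i unfolding adjswap_def by auto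
  have "del_nth k (swap_list L j) ! i = swap_list L j ! (if i < k then i else Suc i)"
    using nth_del_nth[of k "swap_list L j" i] assms i by simp
  also have "\<dots> = L ! adjswap j (if i < k then i else Suc i)"
    by (rule nth_swap_list) (use assms i in auto)
  also have "adjswap j (if i < k then i else Suc i) =
    (if adjswap ?j i < k then adjswap ?j i else Suc (adjswap ?j i))"
    using assms(3,4) unfolding adjswap_def shift_down_def by (cases "j < k"; cases "i < k") auto
  also have "L ! \<dots> = del_nth k L ! adjswap ?j i"
    using nth_del_nth[of k L "adjswap ?j i"] assms ji by simp
  also have "\<dots> = swap_list (del_nth k L) ?j ! i"
    using nth_swap_list[of ?j "del_nth k L" i] assms i j by simp
  finally show "del_nth k (swap_list L j) ! i = swap_list (del_nth k L) ?j ! i" .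
qed

lemma adjswap_adjswap[simp]: "adjswap j (adjswap j x) = x"
  unfolding adjswap_def by auto

lemma shift_down_adjswap_near:
  "k = j \<or> k = Suc j \<Longrightarrow> x \<noteq> k \<Longrightarrow> shift_down (adjswap j k) (adjswap j x) = shift_down k x"
  unfolding shift_down_def adjswap_def by auto

lemma adjswap_shift_down_far:
  "k \<noteq> j \<Longrightarrow> k \<noteq> Suc j \<Longrightarrow> x \<noteq> k \<Longrightarrow>
   adjswap (shift_down k j) (shift_down k x) = shift_down k (adjswap j x)"
  unfolding shift_down_def adjswap_def by auto

lemma perm_lt_less: "perm_lt n \<pi> \<Longrightarrow> i < n \<Longrightarrow> \<pi> i < n"
  unfolding perm_lt_def by auto

lemma perm_lt_image: "perm_lt n \<pi> \<Longrightarrow> \<pi> ` {..<n} = {..<n}"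
  unfolding perm_lt_def by (simp add: endo_inj_surj)

lemma perm_lt_Suc_neq: "perm_lt (Suc n) \<pi> \<Longrightarrow> i < n \<Longrightarrow> \<pi> (Suc i) \<noteq> \<pi> 0"
  unfolding perm_lt_def by (metis Suc_mono inj_on_eq_iff lessThan_iff nat.distinct(1) zero_less_Suc)

lemma perm_lt_tail: assumes "perm_lt (Suc n) \<pi>" shows "perm_lt n (perm_tail \<pi>)"
proof -
  have inj: "inj_on \<pi> {..<Suc n}" and less: "\<And>i. i < Suc n \<Longrightarrow> \<pi> i < Suc n"
    using assms unfolding perm_lt_def by auto
  have neq: "\<And>i. i < n \<Longrightarrow> \<pi> (Suc i) \<noteq> \<pi> 0"
    using perm_lt_Suc_neq[OF assms] .
  have "inj_on (perm_tail \<pi>) {..<n}"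
  proof (rule inj_onI)
    fix x y assume "x \<in> {..<n}" "y \<in> {..<n}" "perm_tail \<pi> x = perm_tail \<pi> y"
    then have "\<pi> (Suc x) = \<pi> (Suc y)"
      using neq[of x] neq[of y] unfolding perm_tail_def shift_down_def by (auto split: if_splits)
    with inj \<open>x \<in> {..<n}\<close> \<open>y \<in> {..<n}\<close> show "x = y" by (auto dest: inj_onD)
  qed
  moreover have "perm_tail \<pi> ` {..<n} \<subseteq> {..<n}"
    using less neq unfolding perm_tail_def shift_down_def by (force split: if_splits)
  ultimately show ?thesis unfolding perm_lt_def ..
qed

lemma keeps_order_tail:
  assumes \<pi>: "perm_lt (Suc n) \<pi>" and L: "length L = Suc n" and keeps: "keeps_order e L (Suc n) \<pi>"
  shows "keeps_order e (del_nth (\<pi> 0) L) n (perm_tail \<pi>)"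
  unfolding keeps_order_def
proof (intro allI impI)
  fix i i' assume ii: "i < i'" "i' < n"
    "del_nth (\<pi> 0) L ! perm_tail \<pi> i \<noteq> e" "del_nth (\<pi> 0) L ! perm_tail \<pi> i' \<noteq> e"
  have neq: "\<pi> (Suc i) \<noteq> \<pi> 0" "\<pi> (Suc i') \<noteq> \<pi> 0" using perm_lt_Suc_neq[OF \<pi>] ii by auto
  have less: "\<pi> 0 < length L" "\<pi> (Suc i) < length L" "\<pi> (Suc i') < length L"
    using perm_lt_less[OF \<pi>] ii L by auto
  have "\<pi> (Suc i) < \<pi> (Suc i')"
    using ii keeps nth_del_nth_shift_down[OF less(1)] less neq unfolding perm_tail_def keeps_order_def by auto
  then show "perm_tail \<pi> i < perm_tail \<pi> i'"
    unfolding perm_tail_def shift_down_def using neq by auto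
qed

lemma keeps_order_take_first:
  assumes \<pi>: "perm_lt (Suc n) \<pi>" and L: "length L = Suc n" and keeps: "keeps_order e L (Suc n) \<pi>"
    and first: "L ! \<pi> 0 \<noteq> e"
  shows "\<forall>x\<in>set (take (\<pi> 0) L). x = e"
proof
  fix x assume "x \<in> set (take (\<pi> 0) L)"
  then obtain p where p: "p < \<pi> 0" "x = L ! p" by (auto simp: in_set_conv_nth)
  moreover have "\<pi> 0 < Suc n" using perm_lt_less[OF \<pi>] by simp
  ultimately obtain i where i: "i < Suc n" "\<pi> i = p"
    using perm_lt_image[OF \<pi>] by (metis imageE lessThan_iff order.strict_trans)
  then have "0 < i" using p by (cases i) auto
  with i p first keeps show "x = e"
    unfolding keeps_order_def by (metis order.asym)
qed

lemma perm_lt_comp: "perm_lt n f \<Longrightarrow> perm_lt n g \<Longrightarrow> perm_lt n (f \<circ> g)"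
  unfolding perm_lt_def by (auto intro: comp_inj_on inj_on_subset simp: image_subset_iff)

lemma perm_lt_adjswap: "Suc j < n \<Longrightarrow> perm_lt n (adjswap j)"
  unfolding perm_lt_def adjswap_def by (auto simp: inj_on_def)

lemma perm_lt_perm_of: "\<forall>j\<in>set js. Suc j < n \<Longrightarrow> perm_lt n (perm_of js)"
proof (induction js)
  case Nil then show ?case by (simp add: perm_lt_def)
next
  case (Cons j js)
  then have "perm_lt n (adjswap j \<circ> perm_of js)" by (intro perm_lt_comp perm_lt_adjswap) auto
  then show ?case by (simp add: comp_def)
qed

lemma perm_of_append: "perm_of (xs @ ys) = perm_of xs \<circ> perm_of ys"
  by (induction xs) auto

lemma perm_of_append_rev: "perm_of (xs @ rev xs) x = x"
proof (induction xs arbitrary: x)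
  case Nil then show ?case by simp
next
  case (Cons a xs)
  have "perm_of ((a # xs) @ rev (a # xs)) = adjswap a \<circ> perm_of (xs @ rev xs) \<circ> adjswap a"
    by (simp add: perm_of_append comp_assoc)
  then show ?case using Cons by simp
qed

lemma perm_of_fixes: "\<forall>j\<in>set js. Suc j < n \<Longrightarrow> perm_of js n = n"
  by (induction js) (auto simp: adjswap_def)

lemma perm_of_rev_upt: "t \<le> n \<Longrightarrow> perm_of (rev [t..<n]) t = n"
  by (induction n) (auto simp: adjswap_def le_Suc_eq)

text \<open>Compose with the cycle carrying \<open>\<pi> n\<close> to \<open>n\<close>, then recurse.\<close>
lemma perm_lt_adjswap_word:
  "perm_lt n \<pi> \<Longrightarrow> \<exists>js. (\<forall>j\<in>set js. Suc j < n) \<and> (\<forall>i<n. perm_of js i = \<pi> i)"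
proof (induction n arbitrary: \<pi>)
  case 0 then show ?case by auto
next
  case (Suc n)
  define t where "t = \<pi> n"
  have t: "t \<le> n" using Suc.prems perm_lt_less t_def by fastforce
  define \<pi>0 where "\<pi>0 = perm_of (rev [t..<n]) \<circ> \<pi>"
  have p0: "perm_lt (Suc n) \<pi>0"
    unfolding \<pi>0_def by (rule perm_lt_comp[OF perm_lt_perm_of Suc.prems]) auto
  have p0n: "\<pi>0 n = n" using perm_of_rev_upt[OF t] by (simp add: \<pi>0_def t_def)
  have "perm_lt n \<pi>0"
    unfolding perm_lt_def
  proof
    show "inj_on \<pi>0 {..<n}" using p0 unfolding perm_lt_def by (auto intro: inj_on_subset)
    have "\<pi>0 i \<noteq> n" if "i < n" for i
      using p0 p0n that unfolding perm_lt_def inj_on_def by (metis lessThan_iff less_Suc_eq less_irrefl)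
    then show "\<pi>0 ` {..<n} \<subseteq> {..<n}" using p0 perm_lt_less less_Suc_eq by fastforce
  qed
  then obtain js where js: "\<forall>j\<in>set js. Suc j < n" "\<forall>i<n. perm_of js i = \<pi>0 i"
    using Suc.IH by blast
  have js_all: "\<forall>i<Suc n. perm_of js i = \<pi>0 i"
    using js perm_of_fixes[OF js(1)] p0n less_Suc_eq by auto
  show ?case
  proof (intro exI conjI allI impI)
    show "\<forall>j\<in>set ([t..<n] @ js). Suc j < Suc n" using js(1) by auto
    fix i assume "i < Suc n"
    then have "perm_of ([t..<n] @ js) i = perm_of ([t..<n] @ rev [t..<n]) (\<pi> i)"
      using js_all by (simp add: perm_of_append \<pi>0_def)
    then show "perm_of ([t..<n] @ js) i = \<pi> i" by (simp add: perm_of_append_rev)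
  qed
qed

lemma canon_mor_cong: "\<forall>i<n. \<pi> i = \<pi>' i \<Longrightarrow> canon_mor C n L \<pi> = canon_mor C n L \<pi>'"
proof (induction n arbitrary: L \<pi> \<pi>')
  case 0 then show ?case by simp
next
  case (Suc n)
  then have "\<pi> 0 = \<pi>' 0" and "\<forall>i<n. perm_tail \<pi> i = perm_tail \<pi>' i"
    by (auto simp: perm_tail_def)
  then show ?case using Suc.IH[of "perm_tail \<pi>" "perm_tail \<pi>'"] by simp
qed

context permutative
begin

lemma ob_del_nth[simp]: "set L \<subseteq> ob C \<Longrightarrow> set (del_nth k L) \<subseteq> ob C"
  unfolding del_nth_def by simp

lemma ob_swap_list[simp]: "set L \<subseteq> ob C \<Longrightarrow> Suc j < length L \<Longrightarrow> set (swap_list L j) \<subseteq> ob C"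
  unfolding swap_list_def by (auto simp: set_update_subsetI)

lemma tens_list_split:
  "set L \<subseteq> ob C \<Longrightarrow> k < length L \<Longrightarrow>
   tens_list C L = tn C (tens_list C (take k L)) (tn C (L ! k) (tens_list C (drop (Suc k) L)))"
  by (subst id_take_nth_drop[of k L]) simp_all

lemma move_front_mor:
  assumes "set L \<subseteq> ob C" "k < length L"
  shows "move_front C L k \<in> mor C" "dm C (move_front C L k) = tens_list C L"
    "cd C (move_front C L k) = tn C (L ! k) (tens_list C (del_nth k L))"
  using assms tens_list_split[OF assms] by (simp_all add: move_front_def del_nth_def)

lemma step_mor_mor:
  assumes "set L \<subseteq> ob C" "Suc j < length L"
  shows "step_mor C L j \<in> mor C" "dm C (step_mor C L j) = tens_list C L"
    "cd C (step_mor C L j) = tens_list C (swap_list L j)"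
proof -
  obtain xs a b ys where L: "L = xs @ a # b # ys" "length xs = j"
    using split_list_at_pair[OF assms(2)] by blast
  show "step_mor C L j \<in> mor C" "dm C (step_mor C L j) = tens_list C L"
    "cd C (step_mor C L j) = tens_list C (swap_list L j)"
    using assms(1) unfolding L(1) L(2)[symmetric] by (simp_all add: step_mor_def nth_append)
qed

lemma canon_mor_mor:
  "set L \<subseteq> ob C \<Longrightarrow> length L = n \<Longrightarrow> perm_lt n \<pi> \<Longrightarrow>
   canon_mor C n L \<pi> \<in> mor C \<and> dm C (canon_mor C n L \<pi>) = tens_list C L"
proof (induction n arbitrary: L \<pi>)
  case 0 then show ?case by simp
next
  case (Suc n)
  then have k: "\<pi> 0 < length L" using perm_lt_less by auto
  with Suc.prems show ?case
    using Suc.IH[of "del_nth (\<pi> 0) L" "perm_tail \<pi>"] perm_lt_tail move_front_mor[OF _ k] by simp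
qed

lemma sy_tn_after_swap:
  assumes ob: "P \<in> ob C" "A \<in> ob C" "B \<in> ob C" "R \<in> ob C"
  shows "cmp C (tnm C (sy C P B) (idm C (tn C A R))) (tnm C (tnm C (idm C P) (sy C A B)) (idm C R))
       = tnm C (sy C (tn C P A) B) (idm C R)"
proof -
  have "tnm C (sy C (tn C P A) B) (idm C R) =
    tnm C (cmp C (tnm C (sy C P B) (idm C A)) (tnm C (idm C P) (sy C A B))) (cmp C (idm C R) (idm C R))"
    using sy_tn_left ob by simp
  also have "\<dots> = cmp C (tnm C (tnm C (sy C P B) (idm C A)) (idm C R)) (tnm C (tnm C (idm C P) (sy C A B)) (idm C R))"
    by (rule interchange) (simp_all add: ob)
  finally show ?thesis using ob by simp
qed

lemma sy_tn_after_swap_back: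
  assumes ob: "P \<in> ob C" "A \<in> ob C" "B \<in> ob C" "R \<in> ob C"
  shows "cmp C (tnm C (sy C (tn C P B) A) (idm C R)) (tnm C (tnm C (idm C P) (sy C A B)) (idm C R))
       = tnm C (sy C P A) (idm C (tn C B R))"
proof -
  have "cmp C (tnm C (sy C (tn C P B) A) (idm C R)) (tnm C (tnm C (idm C P) (sy C A B)) (idm C R))
     = tnm C (cmp C (sy C (tn C P B) A) (tnm C (idm C P) (sy C A B))) (cmp C (idm C R) (idm C R))"
    by (rule interchange[symmetric]) (simp_all add: ob)
  also have "cmp C (sy C (tn C P B) A) (tnm C (idm C P) (sy C A B)) =
      cmp C (tnm C (sy C P A) (idm C B)) (cmp C (tnm C (idm C P) (sy C B A)) (tnm C (idm C P) (sy C A B)))"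
    using sy_tn_left[of P B A] ob by (simp add: cmp_assoc)
  also have "cmp C (tnm C (idm C P) (sy C B A)) (tnm C (idm C P) (sy C A B)) =
      tnm C (cmp C (idm C P) (idm C P)) (cmp C (sy C B A) (sy C A B))"
    by (rule interchange[symmetric]) (simp_all add: ob)
  finally show ?thesis using ob sy_sy[of A B] by simp
qed

lemma sy_commute_swap_behind:
  assumes ob: "Q \<in> ob C" "D \<in> ob C" "M \<in> ob C" "A \<in> ob C" "B \<in> ob C" "R \<in> ob C"
  shows "cmp C (tnm C (sy C Q D) (idm C (tn C M (tn C B (tn C A R)))))
            (tnm C (tnm C (idm C (tn C Q (tn C D M))) (sy C A B)) (idm C R))
       = cmp C (tnm C (idm C D) (tnm C (tnm C (idm C (tn C Q M)) (sy C A B)) (idm C R)))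
            (tnm C (sy C Q D) (idm C (tn C M (tn C A (tn C B R)))))"
proof -
  define g where "g = tnm C (idm C M) (tnm C (sy C A B) (idm C R))"
  have g: "g \<in> mor C" "dm C g = tn C M (tn C A (tn C B R))" "cd C g = tn C M (tn C B (tn C A R))"
    unfolding g_def using ob by simp_all
  have "tnm C (tnm C (idm C (tn C Q (tn C D M))) (sy C A B)) (idm C R) = tnm C (idm C (tn C Q D)) g"
    and "tnm C (idm C D) (tnm C (tnm C (idm C (tn C Q M)) (sy C A B)) (idm C R)) = tnm C (idm C (tn C D Q)) g"
    unfolding g_def using ob by (simp_all del: tnm_assoc add: tnm_assoc[symmetric])
  moreover have "cmp C (tnm C (sy C Q D) (idm C (cd C g))) (tnm C (idm C (tn C Q D)) g) = tnm C (sy C Q D) g"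
    and "cmp C (tnm C (idm C (tn C D Q)) g) (tnm C (sy C Q D) (idm C (dm C g))) = tnm C (sy C Q D) g"
    using interchange[of "idm C (tn C Q D)" "sy C Q D" g "idm C (cd C g)"]
      interchange[of "sy C Q D" "idm C (tn C D Q)" "idm C (dm C g)" g] g ob by simp_all
  ultimately show ?thesis using g ob by simp
qed

lemma sy_commute_swap_inside:
  assumes ob: "P \<in> ob C" "A \<in> ob C" "B \<in> ob C" "N \<in> ob C" "D \<in> ob C" "R \<in> ob C"
  shows "cmp C (tnm C (sy C (tn C P (tn C B (tn C A N))) D) (idm C R))
            (tnm C (tnm C (idm C P) (sy C A B)) (idm C (tn C N (tn C D R))))
       = cmp C (tnm C (idm C D) (tnm C (tnm C (idm C P) (sy C A B)) (idm C (tn C N R))))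
            (tnm C (sy C (tn C P (tn C A (tn C B N))) D) (idm C R))"
proof -
  define f where "f = tnm C (tnm C (idm C P) (sy C A B)) (idm C N)"
  have f: "f \<in> mor C" "dm C f = tn C P (tn C A (tn C B N))" "cd C f = tn C P (tn C B (tn C A N))"
    unfolding f_def using ob by simp_all
  have "tnm C (tnm C (idm C P) (sy C A B)) (idm C (tn C N (tn C D R))) = tnm C (tnm C f (idm C D)) (idm C R)"
    and "tnm C (idm C D) (tnm C (tnm C (idm C P) (sy C A B)) (idm C (tn C N R))) = tnm C (tnm C (idm C D) f) (idm C R)"
    unfolding f_def using ob by simp_all
  moreover have "cmp C (tnm C (sy C (cd C f) D) (idm C R)) (tnm C (tnm C f (idm C D)) (idm C R))
      = tnm C (cmp C (sy C (cd C f) D) (tnm C f (idm C D))) (cmp C (idm C R) (idm C R))"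
    by (rule interchange[symmetric]) (simp_all add: ob f)
  moreover have "\<dots> = tnm C (cmp C (tnm C (idm C D) f) (sy C (dm C f) D)) (cmp C (idm C R) (idm C R))"
    using sy_natural[of f "idm C D"] f ob by simp
  moreover have "\<dots> = cmp C (tnm C (tnm C (idm C D) f) (idm C R)) (tnm C (sy C (dm C f) D) (idm C R))"
    by (rule interchange) (simp_all add: ob f)
  ultimately show ?thesis using f by simp
qed

lemma move_front_step_near:
  assumes "set L \<subseteq> ob C" "Suc j < length L" "k = j \<or> k = Suc j"
  shows "cmp C (move_front C (swap_list L j) k) (step_mor C L j) = move_front C L (adjswap j k)"
proof -
  obtain xs a b ys where L: "L = xs @ a # b # ys" "length xs = j"
    using split_list_at_pair[OF assms(2)] by blast
  have ob: "tens_list C xs \<in> ob C" "a \<in> ob C" "b \<in> ob C" "tens_list C ys \<in> ob C"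
    using assms(1) L by auto
  from assms(3) show ?thesis
  proof
    assume "k = j"
    then show ?thesis
      using sy_tn_after_swap[OF ob] ob assms(1) unfolding L(1) L(2)[symmetric]
      by (simp add: move_front_def step_mor_def adjswap_def nth_append)
  next
    assume "k = Suc j"
    then show ?thesis
      using sy_tn_after_swap_back[OF ob] ob assms(1) unfolding L(1) L(2)[symmetric]
      by (simp add: move_front_def step_mor_def adjswap_def nth_append)
  qed
qed

lemma move_front_step_before:
  assumes "set us \<subseteq> ob C" "d \<in> ob C" "set vs \<subseteq> ob C" "a \<in> ob C" "b \<in> ob C" "set ys \<subseteq> ob C"
  shows "cmp C (move_front C (us @ d # vs @ b # a # ys) (length us))
      (step_mor C (us @ d # vs @ a # b # ys) (length us + 1 + length vs))
    = cmp C (tnm C (idm C d) (step_mor C (us @ vs @ a # b # ys) (length us + length vs)))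
      (move_front C (us @ d # vs @ a # b # ys) (length us))"
  using sy_commute_swap_behind[of "tens_list C us" d "tens_list C vs" a b "tens_list C ys"] assms
  by (simp add: move_front_def step_mor_def nth_append numeral_3_eq_3)

lemma move_front_step_after:
  assumes "set xs \<subseteq> ob C" "a \<in> ob C" "b \<in> ob C" "set vs \<subseteq> ob C" "d \<in> ob C" "set ys \<subseteq> ob C"
  shows "cmp C (move_front C (xs @ b # a # vs @ d # ys) (length xs + 2 + length vs))
      (step_mor C (xs @ a # b # vs @ d # ys) (length xs))
    = cmp C (tnm C (idm C d) (step_mor C (xs @ a # b # vs @ ys) (length xs)))
      (move_front C (xs @ a # b # vs @ d # ys) (length xs + 2 + length vs))"
  using sy_commute_swap_inside[of "tens_list C xs" a b "tens_list C vs" d "tens_list C ys"] assms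
  by (simp add: move_front_def step_mor_def nth_append numeral_3_eq_3)

lemma move_front_step_far:
  assumes "set L \<subseteq> ob C" "Suc j < length L" "k < length L" "k \<noteq> j" "k \<noteq> Suc j"
  shows "cmp C (move_front C (swap_list L j) k) (step_mor C L j)
       = cmp C (tnm C (idm C (L ! k)) (step_mor C (del_nth k L) (shift_down k j))) (move_front C L k)"
proof -
  obtain xs a b ys where L: "L = xs @ a # b # ys" "length xs = j"
    using split_list_at_pair[OF assms(2)] by blast
  consider "k < j" | "Suc j < k" using assms(4,5) by linarith
  then show ?thesis
  proof cases
    case 1
    then obtain us d vs where xs: "xs = us @ d # vs" "length us = k"
      using split_list_at[of k xs] L(2) by blast
    have j: "j = length us + 1 + length vs" using L xs by simp
    have "shift_down k j = length us + length vs" "L ! k = d" "del_nth k L = us @ vs @ a # b # ys"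
      "swap_list L j = us @ d # vs @ b # a # ys"
      using 1 L xs swap_list_append[of "us @ d # vs"] unfolding j by (auto simp: shift_down_def nth_append)
    then show ?thesis
      using move_front_step_before[of us d vs a b ys] assms(1) unfolding L(1) xs(1) by (simp add: j xs(2))
  next
    case 2
    have "k - j - 2 < length ys" using 2 assms(3) L by auto
    then obtain vs d zs where ys: "ys = vs @ d # zs" "length vs = k - j - 2"
      using split_list_at[of "k - j - 2" ys] by blast
    have k: "k = length xs + 2 + length vs" using 2 L ys by simp
    have "shift_down k j = length xs" "L ! k = d" "del_nth k L = xs @ a # b # vs @ zs"
      "swap_list L j = xs @ b # a # vs @ d # zs"
      using 2 L del_nth_append[of "xs @ a # b # vs" d zs] unfolding ys(1) k
      by (auto simp: shift_down_def nth_append)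
    then show ?thesis
      using move_front_step_after[of xs a b vs d zs] assms(1) unfolding L(1) ys(1) by (simp add: k L(2))
  qed
qed

end

context permutative
begin

lemma cmp_tnm_idm_cmp:
  assumes "A \<in> ob C" "f \<in> mor C" "g \<in> mor C" "dm C g = cd C f" "h \<in> mor C" "cd C h = tn C A (dm C f)"
  shows "cmp C (tnm C (idm C A) g) (cmp C (tnm C (idm C A) f) h) = cmp C (tnm C (idm C A) (cmp C g f)) h"
  using interchange[of "idm C A" "idm C A" f g] assms by (simp add: cmp_assoc)

lemma canon_mor_Suc_cmp:
  assumes "set L \<subseteq> ob C" "length L = Suc n" "perm_lt (Suc n) \<pi>" "f \<in> mor C" "cd C f = tens_list C L"
  shows "cmp C (canon_mor C (Suc n) L \<pi>) f = cmp C
    (tnm C (idm C (L ! \<pi> 0)) (canon_mor C n (del_nth (\<pi> 0) L) (perm_tail \<pi>))) (cmp C (move_front C L (\<pi> 0)) f)"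
proof -
  have k: "\<pi> 0 < length L" using assms(2,3) perm_lt_less by auto
  show ?thesis
    using move_front_mor[OF assms(1) k] canon_mor_mor[OF _ _ perm_lt_tail[OF assms(3)], of "del_nth (\<pi> 0) L"]
      assms k by (simp add: cmp_assoc)
qed

text \<open>The coherence theorem in normal-form shape: precomposing with an adjacent symmetry changes the
  normal form only through its permutation.\<close>
lemma canon_mor_step:
  "set L \<subseteq> ob C \<Longrightarrow> length L = n \<Longrightarrow> Suc j < n \<Longrightarrow> perm_lt n \<pi> \<Longrightarrow>
   cmp C (canon_mor C n (swap_list L j) \<pi>) (step_mor C L j) = canon_mor C n L (adjswap j \<circ> \<pi>)"
proof (induction n arbitrary: L j \<pi>)
  case 0 then show ?case by simp
next
  case (Suc n)
  note obL = Suc.prems(1) and lenL = Suc.prems(2) and j = Suc.prems(3)[folded Suc.prems(2)]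
    and \<pi> = Suc.prems(4)
  define k where "k = \<pi> 0"
  define L' where "L' = swap_list L j"
  have k: "k < length L" using \<pi> perm_lt_less lenL k_def by auto
  have neq: "\<And>i. i < n \<Longrightarrow> \<pi> (Suc i) \<noteq> k" using perm_lt_Suc_neq[OF \<pi>] k_def by blast
  have tail: "perm_lt n (perm_tail \<pi>)" by (rule perm_lt_tail[OF \<pi>])
  have lhs: "cmp C (canon_mor C (Suc n) L' \<pi>) (step_mor C L j) =
    cmp C (tnm C (idm C (L ! adjswap j k)) (canon_mor C n (del_nth k L') (perm_tail \<pi>)))
      (cmp C (move_front C L' k) (step_mor C L j))"
    using canon_mor_Suc_cmp[of L' n \<pi> "step_mor C L j"] step_mor_mor[OF obL j] nth_swap_list[OF j k]
      obL lenL j \<pi> unfolding L'_def k_def by simp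
  have rhs: "canon_mor C (Suc n) L (adjswap j \<circ> \<pi>) =
    cmp C (tnm C (idm C (L ! adjswap j k))
        (canon_mor C n (del_nth (adjswap j k) L) (perm_tail (adjswap j \<circ> \<pi>))))
      (move_front C L (adjswap j k))"
    by (simp add: k_def)
  show ?case
  proof (cases "k = j \<or> k = Suc j")
    case True
    have "canon_mor C n (del_nth k L') (perm_tail \<pi>) =
      canon_mor C n (del_nth (adjswap j k) L) (perm_tail (adjswap j \<circ> \<pi>))"
      unfolding L'_def del_nth_swap_list_near[OF j True] using neq True
      by (intro canon_mor_cong) (simp add: perm_tail_def k_def[symmetric] shift_down_adjswap_near)
    then show ?thesis
      unfolding L'_def[symmetric] lhs rhs move_front_step_near[OF obL j True, folded L'_def] by simp
  next
    case False
    then have kj: "k \<noteq> j" "k \<noteq> Suc j" and kk: "adjswap j k = k" by (auto simp: adjswap_def)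
    let ?j = "shift_down k j" and ?L = "del_nth k L"
    have obL0: "set ?L \<subseteq> ob C" and lenL0: "length ?L = n" and j0: "Suc ?j < n"
      using obL lenL k j kj by (auto simp: shift_down_def)
    have L'0: "del_nth k L' = swap_list ?L ?j"
      unfolding L'_def by (rule del_nth_swap_list_far[OF j k kj])
    have IH: "cmp C (canon_mor C n (del_nth k L') (perm_tail \<pi>)) (step_mor C ?L ?j) =
      canon_mor C n ?L (perm_tail (adjswap j \<circ> \<pi>))"
      unfolding L'0 Suc.IH[OF obL0 lenL0 j0 tail] using kj neq
      by (intro canon_mor_cong) (simp add: perm_tail_def k_def[symmetric] kk adjswap_shift_down_far)
    show ?thesis
      unfolding L'_def[symmetric] lhs rhs kk move_front_step_far[OF obL j k kj, folded L'_def] IH[symmetric]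
      using step_mor_mor[OF obL0 j0[folded lenL0]] canon_mor_mor[OF _ _ tail, of "del_nth k L'"]
        move_front_mor[OF obL k] ob_swap_list[OF obL0 j0[folded lenL0]] lenL0 obL k
      by (intro cmp_tnm_idm_cmp) (simp_all add: L'0)
  qed
qed

lemma move_front_idm:
  assumes "set L \<subseteq> ob C" "k < length L" "L ! k = un C \<or> (\<forall>x\<in>set (take k L). x = un C)"
  shows "move_front C L k = idm C (tens_list C L)"
  using assms(3) tens_list_split[OF assms(1,2)] assms(1,2) tens_list_units[of "take k L"]
  by (auto simp: move_front_def)

text \<open>Each move of the normal form then passes only units, or moves a unit.\<close>
lemma canon_mor_keeps_order_idm:
  "set L \<subseteq> ob C \<Longrightarrow> length L = n \<Longrightarrow> perm_lt n \<pi> \<Longrightarrow> keeps_order (un C) L n \<pi> \<Longrightarrow>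
   canon_mor C n L \<pi> = idm C (tens_list C L)"
proof (induction n arbitrary: L \<pi>)
  case 0 then show ?case by simp
next
  case (Suc n)
  have k: "\<pi> 0 < length L" using Suc.prems perm_lt_less by auto
  have "canon_mor C n (del_nth (\<pi> 0) L) (perm_tail \<pi>) = idm C (tens_list C (del_nth (\<pi> 0) L))"
    using Suc.IH[of "del_nth (\<pi> 0) L" "perm_tail \<pi>"] Suc.prems k perm_lt_tail[OF Suc.prems(3)]
      keeps_order_tail[OF Suc.prems(3,2,4)] by simp
  moreover have "move_front C L (\<pi> 0) = idm C (tens_list C L)"
    using move_front_idm[OF Suc.prems(1) k] keeps_order_take_first[OF Suc.prems(3,2,4)] by blast
  ultimately show ?case
    using move_front_mor(3)[OF Suc.prems(1) k] Suc.prems(1) k by simp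
qed

lemma steps_mor_eq_canon_mor:
  "set L \<subseteq> ob C \<Longrightarrow> \<forall>j\<in>set js. Suc j < length L \<Longrightarrow>
   steps_mor C L js = canon_mor C (length L) L (perm_of js)"
proof (induction js arbitrary: L)
  case Nil
  have "canon_mor C (length L) L (perm_of []) = idm C (tens_list C L)"
    by (rule canon_mor_keeps_order_idm) (use Nil in \<open>auto simp: perm_lt_def keeps_order_def\<close>)
  then show ?case by (metis steps_mor.simps(1))
next
  case (Cons j js)
  then have "steps_mor C L (j # js) = cmp C (canon_mor C (length L) (swap_list L j) (perm_of js)) (step_mor C L j)"
    by simp
  also have "\<dots> = canon_mor C (length L) L (adjswap j \<circ> perm_of js)"
    by (rule canon_mor_step) (use Cons.prems perm_lt_perm_of in auto)
  finally show ?case unfolding perm_of.simps(2) .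
qed

lemma coh_monotone_idm:
  assumes obL: "set L \<subseteq> ob C" and \<sigma>: "bij_betw \<sigma> {..<length L} {..<length L}"
    and mono: "\<forall>p q. p < q \<longrightarrow> q < length L \<longrightarrow> L ! p \<noteq> un C \<longrightarrow> L ! q \<noteq> un C \<longrightarrow> \<sigma> p < \<sigma> q"
  shows "coh C L \<sigma> = idm C (tens_list C L)"
proof -
  let ?n = "length L"
  have word_idm: "steps_mor C L js = idm C (tens_list C L)"
    if js: "\<forall>j\<in>set js. Suc j < ?n" "\<forall>i<?n. \<sigma> (perm_of js i) = i" for js
  proof -
    have p: "perm_lt ?n (perm_of js)" using perm_lt_perm_of js(1) by blast
    have "canon_mor C ?n L (perm_of js) = idm C (tens_list C L)"
    proof (rule canon_mor_keeps_order_idm[OF obL refl p], unfold keeps_order_def, intro allI impI)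
      fix i i' assume ii: "i < i'" "i' < ?n" "L ! perm_of js i \<noteq> un C" "L ! perm_of js i' \<noteq> un C"
      have "perm_of js i < ?n" "perm_of js i' < ?n" using p perm_lt_less ii by auto
      with ii js(2) mono show "perm_of js i < perm_of js i'"
        by (metis linorder_neqE_nat not_less_iff_gr_or_eq order.strict_trans)
    qed
    then show ?thesis using steps_mor_eq_canon_mor[OF obL js(1)] by simp
  qed
  define \<pi> where "\<pi> = inv_into {..<?n} \<sigma>"
  have \<pi>: "perm_lt ?n \<pi>"
    using bij_betw_inv_into[OF \<sigma>] unfolding bij_betw_def perm_lt_def \<pi>_def by auto
  have \<sigma>\<pi>: "\<And>i. i < ?n \<Longrightarrow> \<sigma> (\<pi> i) = i"
    unfolding \<pi>_def using \<sigma> by (meson bij_betw_inv_into_right lessThan_iff)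
  obtain js where "\<forall>j\<in>set js. Suc j < ?n" "\<forall>i<?n. perm_of js i = \<pi> i"
    using perm_lt_adjswap_word[OF \<pi>] by blast
  then have "\<exists>f js. (\<forall>j\<in>set js. Suc j < ?n) \<and> (\<forall>i<?n. \<sigma> (perm_of js i) = i) \<and> f = steps_mor C L js"
    using \<sigma>\<pi> by auto
  from someI_ex[OF this] show ?thesis
    unfolding coh_def using word_idm by auto
qed

end

section \<open>Ordered tensor products in \<open>\<Phi>(C)\<close>\<close>

lemma sorted_list_of_set_eqI:
  "finite A \<Longrightarrow> sorted_wrt (<) xs \<Longrightarrow> set xs = A \<Longrightarrow> sorted_list_of_set A = xs"
  by (metis strict_sorted_equal strict_sorted_list_of_set set_sorted_list_of_set)

lemma sorted_list_of_set_image_mono: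
  assumes "finite S" "\<forall>x\<in>S. \<forall>y\<in>S. x < y \<longrightarrow> u x < (u y :: nat)"
  shows "sorted_list_of_set (u ` S) = map u (sorted_list_of_set S)"
proof (rule sorted_list_of_set_eqI)
  have "sorted_wrt (<) (sorted_list_of_set S)" "set (sorted_list_of_set S) = S" using assms(1) by auto
  then show "sorted_wrt (<) (map u (sorted_list_of_set S))"
    using assms(2) unfolding sorted_wrt_map by (metis (no_types, lifting) sorted_wrt_mono_rel)
qed (use assms in simp_all)

lemma sorted_list_of_set_Un_less:
  assumes "finite A" "finite B" "\<forall>x\<in>A. \<forall>y\<in>B. x < (y :: nat)"
  shows "sorted_list_of_set (A \<union> B) = sorted_list_of_set A @ sorted_list_of_set B"
  by (rule sorted_list_of_set_eqI) (use assms in \<open>auto simp: sorted_wrt_append\<close>)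

lemma card_less_nth_sorted_list_of_set:
  assumes "finite A" "p < card A"
  shows "card {k\<in>A. k < sorted_list_of_set A ! p} = (p :: nat)"
proof -
  let ?xs = "sorted_list_of_set A"
  have xs: "sorted_wrt (<) ?xs" "distinct ?xs" "set ?xs = A" "length ?xs = card A" using assms by auto
  have "{k\<in>A. k < ?xs ! p} = set (take p ?xs)"
  proof (intro equalityI subsetI)
    fix k assume k: "k \<in> {k\<in>A. k < ?xs ! p}"
    then obtain q where q: "q < length ?xs" "k = ?xs ! q" using xs by (metis in_set_conv_nth mem_Collect_eq)
    have "q < p"
    proof (rule ccontr)
      assume "\<not> q < p"
      then have "?xs ! p \<le> ?xs ! q" using sorted_wrt_nth_less[OF xs(1), of p q] q by (cases "p = q") auto
      then show False using k q by auto
    qed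
    then show "k \<in> set (take p ?xs)" using q by (auto simp: in_set_conv_nth)
  next
    fix k assume "k \<in> set (take p ?xs)"
    then obtain q where q: "q < p" "k = ?xs ! q" using assms xs by (auto simp: in_set_conv_nth)
    then show "k \<in> {k\<in>A. k < ?xs ! p}" using assms xs sorted_wrt_nth_less[OF xs(1), of q p] nth_mem[of q ?xs] by auto
  qed
  then show ?thesis using xs assms by (simp add: distinct_card)
qed

lemma bij_lessThan_extension:
  fixes S :: "nat set" and u :: "nat \<Rightarrow> nat"
  assumes "finite S" "inj_on u S"
  obtains K \<sigma> where "bij_betw \<sigma> {..<K} {..<K}" "\<forall>i\<in>S. \<sigma> i = u i" "S \<union> u ` S \<subseteq> {..<K}"
proof -
  obtain K where K: "S \<union> u ` S \<subseteq> {..<K}"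
    using finite_nat_set_iff_bounded[of "S \<union> u ` S"] assms(1) by auto
  have "card ({..<K} - S) = card ({..<K} - u ` S)"
    using K assms by (simp add: card_Diff_subset card_image)
  then obtain h where h: "bij_betw h ({..<K} - S) ({..<K} - u ` S)"
    using finite_same_card_bij by blast
  define \<sigma> where "\<sigma> = (\<lambda>i. if i \<in> S then u i else h i)"
  have "bij_betw \<sigma> S (u ` S)"
    using bij_betw_cong[of S \<sigma> u] inj_on_imp_bij_betw[OF assms(2)] unfolding \<sigma>_def by simp
  moreover have "bij_betw \<sigma> ({..<K} - S) ({..<K} - u ` S)"
    using bij_betw_cong[of "{..<K} - S" \<sigma> h] h unfolding \<sigma>_def by simp
  ultimately have "bij_betw \<sigma> (S \<union> ({..<K} - S)) (u ` S \<union> ({..<K} - u ` S))"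
    by (rule bij_betw_combine) auto
  moreover have "S \<union> ({..<K} - S) = {..<K}" "u ` S \<union> ({..<K} - u ` S) = {..<K}" using K by auto
  ultimately show ?thesis using that K unfolding \<sigma>_def by auto
qed

context permutative
begin

lemma supp_push: "inj u \<Longrightarrow> supp C (push C u X) = u ` supp C X"
  unfolding supp_def push_def by (auto simp: inv_f_f inj_eq)

lemma push_ob: "\<forall>i. X i \<in> ob C \<Longrightarrow> push C u X i \<in> ob C"
  unfolding push_def by auto

lemma supp_osum: "supp C (osum C X Y) = supp C X \<union> supp C Y"
  unfolding supp_def osum_def by auto

lemma osum_ob: "\<forall>i. X i \<in> ob C \<Longrightarrow> \<forall>i. Y i \<in> ob C \<Longrightarrow> osum C X Y i \<in> ob C"
  unfolding osum_def by auto

lemma bigtens_ob: "\<forall>i. X i \<in> ob C \<Longrightarrow> bigtens C X \<in> ob C"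
  unfolding bigtens_def by (intro tens_list_ob) auto

lemma bigtens_push:
  assumes "inj u" "finite (supp C X)" "\<forall>x\<in>supp C X. \<forall>y\<in>supp C X. x < y \<longrightarrow> u x < u y"
  shows "bigtens C (push C u X) = bigtens C X"
  unfolding bigtens_def supp_push[OF assms(1)] sorted_list_of_set_image_mono[OF assms(2,3)]
  using assms(1) by (simp add: comp_def push_def)

lemma bigtens_osum:
  assumes "finite (supp C X)" "finite (supp C Y)" "\<forall>i. X i \<in> ob C" "\<forall>i. Y i \<in> ob C"
    "\<forall>x\<in>supp C X. \<forall>y\<in>supp C Y. x < y"
  shows "bigtens C (osum C X Y) = tn C (bigtens C X) (bigtens C Y)"
proof -
  have "map (osum C X Y) (sorted_list_of_set (supp C X)) = map X (sorted_list_of_set (supp C X))"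
    and "map (osum C X Y) (sorted_list_of_set (supp C Y)) = map Y (sorted_list_of_set (supp C Y))"
    using assms(1,2,5) by (auto simp: osum_def)
  then show ?thesis
    unfolding bigtens_def supp_osum sorted_list_of_set_Un_less[OF assms(1,2,5)] map_append
    using assms(3,4) by (metis image_subset_iff set_map tens_list_append UNIV_I subsetI)
qed

lemma inv_mor_idm: "A \<in> ob C \<Longrightarrow> inv_mor C (idm C A) = idm C A"
  using someI_ex[of "\<lambda>g. g \<in> mor C \<and> dm C g = A \<and> cd C g = A \<and> cmp C g (idm C A) = idm C A
    \<and> cmp C (idm C A) g = idm C A"]
  by (auto simp: inv_mor_def)

lemma rearr_idm:
  assumes fin: "finite (supp C X)" "finite (supp C Y)" and ob: "\<forall>i. X i \<in> ob C" "\<forall>i. Y i \<in> ob C"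
    and less: "\<forall>x\<in>supp C X. \<forall>y\<in>supp C Y. x < y"
  shows "rearr C X Y = idm C (bigtens C (osum C X Y))"
proof -
  let ?A = "supp C X" and ?B = "supp C Y"
  define S where "S = sorted_list_of_set (?A \<union> ?B)"
  define \<sigma> where "\<sigma> = (\<lambda>p. if S ! p \<in> ?A then card {k\<in>?A. k < S ! p}
                    else card ?A + card {k\<in>?B. k < S ! p})"
  have S: "S = sorted_list_of_set ?A @ sorted_list_of_set ?B"
    unfolding S_def using sorted_list_of_set_Un_less fin less by blast
  have \<sigma>_id: "\<sigma> p = p" if p: "p < length S" for p
  proof (cases "p < card ?A")
    case True
    then have "S ! p = sorted_list_of_set ?A ! p" unfolding S using fin by (simp add: nth_append)
    moreover have "sorted_list_of_set ?A ! p \<in> ?A" using True fin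
      by (metis length_sorted_list_of_set nth_mem set_sorted_list_of_set)
    ultimately show ?thesis
      unfolding \<sigma>_def using card_less_nth_sorted_list_of_set[OF fin(1) True] by simp
  next
    case False
    define q where "q = p - card ?A"
    have q: "q < card ?B" using False p fin unfolding S q_def by simp
    have "S ! p = sorted_list_of_set ?B ! q" unfolding S q_def using fin False by (simp add: nth_append)
    moreover have "sorted_list_of_set ?B ! q \<in> ?B" using q fin
      by (metis length_sorted_list_of_set nth_mem set_sorted_list_of_set)
    moreover have "?A \<inter> ?B = {}" using less by auto
    ultimately show ?thesis
      unfolding \<sigma>_def using card_less_nth_sorted_list_of_set[OF fin(2) q] False q_def by auto
  qed
  have "coh C (map (osum C X Y) S) \<sigma> = idm C (tens_list C (map (osum C X Y) S))"
  proof (rule coh_monotone_idm)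
    show "set (map (osum C X Y) S) \<subseteq> ob C" using osum_ob ob by auto
    show "bij_betw \<sigma> {..<length (map (osum C X Y) S)} {..<length (map (osum C X Y) S)}"
      using bij_betw_cong[of "{..<length S}" \<sigma> id] \<sigma>_id by simp
  qed (use \<sigma>_id in auto)
  then show ?thesis
    unfolding rearr_def bigtens_def supp_osum Let_def S_def[symmetric] \<sigma>_def[symmetric] .
qed

lemma tens_list_filter_units: "set L \<subseteq> ob C \<Longrightarrow> tens_list C (filter (\<lambda>x. x \<noteq> un C) L) = tens_list C L"
  by (induction L) auto

lemma tens_list_upt_eq_bigtens:
  assumes "\<forall>i. X i \<in> ob C" "\<forall>i\<ge>K. X i = un C" "finite (supp C X)"
  shows "tens_list C (map X [0..<K]) = bigtens C X"
proof -
  have "set (filter (\<lambda>i. X i \<noteq> un C) [0..<K]) = supp C X"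
    using assms(2) leI unfolding supp_def by auto
  then have "sorted_list_of_set (supp C X) = filter (\<lambda>i. X i \<noteq> un C) [0..<K]"
    using assms(3) by (intro sorted_list_of_set_eqI) (auto simp: sorted_wrt_filter)
  moreover have "tens_list C (map X [0..<K]) = tens_list C (filter (\<lambda>x. x \<noteq> un C) (map X [0..<K]))"
    using tens_list_filter_units[of "map X [0..<K]"] assms(1) by (auto simp: image_subset_iff)
  ultimately show ?thesis unfolding bigtens_def by (simp add: filter_map comp_def)
qed

lemma struct_iso_idm:
  assumes X: "Phi_obj C X" and u: "inj u" and mono: "\<forall>x\<in>supp C X. \<forall>y\<in>supp C X. x < y \<longrightarrow> u x < u y"
  shows "struct_iso C u X = idm C (bigtens C X)"
proof -
  let ?Q = "\<lambda>f. \<exists>K \<sigma>. bij_betw \<sigma> {..<K} {..<K} \<and> (\<forall>i<K. X i \<noteq> un C \<longrightarrow> \<sigma> i = u i) \<and>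
      (\<forall>i\<ge>K. X i = un C \<and> push C u X i = un C) \<and> f = coh C (map X [0..<K]) \<sigma>"
  have fin: "finite (supp C X)" and obX: "\<forall>i. X i \<in> ob C" using X unfolding Phi_obj_def by auto
  obtain K \<sigma> where \<sigma>: "bij_betw \<sigma> {..<K} {..<K}" "\<forall>i\<in>supp C X. \<sigma> i = u i"
    and K: "supp C X \<union> u ` supp C X \<subseteq> {..<K}"
    by (rule bij_lessThan_extension[OF fin inj_on_subset[OF u subset_UNIV]])
  have "\<forall>i\<ge>K. X i = un C \<and> push C u X i = un C"
    using K unfolding supp_push[OF u, symmetric] unfolding supp_def by auto
  with \<sigma> have "?Q (coh C (map X [0..<K]) \<sigma>)" unfolding supp_def by blast
  then have "?Q (struct_iso C u X)" unfolding struct_iso_def by (rule someI[of ?Q])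
  then obtain K' \<sigma>' where K': "bij_betw \<sigma>' {..<K'} {..<K'}" "\<forall>i<K'. X i \<noteq> un C \<longrightarrow> \<sigma>' i = u i"
      "\<forall>i\<ge>K'. X i = un C" and iso: "struct_iso C u X = coh C (map X [0..<K']) \<sigma>'"
    by blast
  have "coh C (map X [0..<K']) \<sigma>' = idm C (tens_list C (map X [0..<K']))"
    by (rule coh_monotone_idm) (use obX K' mono in \<open>auto simp: supp_def\<close>)
  then show ?thesis using iso tens_list_upt_eq_bigtens[OF obX K'(3) fin] by simp
qed

end

section \<open>Monotone injections \<open>\<phi> : m \<times> \<omega> \<rightarrow> \<omega>\<close>\<close>

abbreviation push_osum :: "('o, 'm) pcat \<Rightarrow> (nat \<Rightarrow> nat \<Rightarrow> nat) \<Rightarrow> (nat \<Rightarrow> nat \<Rightarrow> 'o) \<Rightarrow> nat list \<Rightarrow> nat \<Rightarrow> 'o"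
  where "push_osum C \<phi> Xs as \<equiv> osum_list C (map (\<lambda>a. push C (\<phi> a) (Xs a)) as)"

lemma osum_list_Nil[simp]: "osum_list C [] = (\<lambda>_. un C)"
  and osum_list_Cons[simp]: "osum_list C (X # Xs) = osum C X (osum_list C Xs)"
  by (simp_all add: osum_list_def)

lemma supp_unit[simp]: "supp C (\<lambda>_. un C) = {}"
  by (simp add: supp_def)

lemma inj_fam_inj: "inj_fam m \<phi> \<Longrightarrow> a < m \<Longrightarrow> inj (\<phi> a)"
  unfolding inj_fam_def inj_on_def inj_def by auto

lemma X_monotone_mono:
  "X_monotone C m Xs \<phi> \<Longrightarrow> a < m \<Longrightarrow> \<forall>x\<in>supp C (Xs a). \<forall>y\<in>supp C (Xs a). x < y \<longrightarrow> \<phi> a x < \<phi> a y"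
  unfolding X_monotone_def supp_def by auto

lemma X_monotone_less:
  "X_monotone C m Xs \<phi> \<Longrightarrow> a < b \<Longrightarrow> b < m \<Longrightarrow> x \<in> supp C (Xs a) \<Longrightarrow> y \<in> supp C (Xs b) \<Longrightarrow> \<phi> a x < \<phi> b y"
  unfolding X_monotone_def supp_def by auto

context permutative
begin

lemma supp_push_osum:
  "\<forall>a\<in>set as. inj (\<phi> a) \<Longrightarrow> supp C (push_osum C \<phi> Xs as) = (\<Union>a\<in>set as. \<phi> a ` supp C (Xs a))"
  by (induction as) (auto simp: supp_osum supp_push)

lemma push_osum_ob: "\<forall>a\<in>set as. \<forall>i. Xs a i \<in> ob C \<Longrightarrow> push_osum C \<phi> Xs as i \<in> ob C"
  by (induction as arbitrary: i) (auto intro: osum_ob push_ob)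

lemma supp_push_less_supp_push_osum:
  assumes "inj_fam m \<phi>" "X_monotone C m Xs \<phi>" "a < m" "\<forall>b\<in>set as. a < b \<and> b < m"
  shows "\<forall>x\<in>supp C (push C (\<phi> a) (Xs a)). \<forall>y\<in>supp C (push_osum C \<phi> Xs as). x < y"
proof -
  have inj: "\<forall>b\<in>set (a # as). inj (\<phi> b)"
    using assms(1,3,4) inj_fam_inj by auto
  show ?thesis
    using supp_push[of "\<phi> a" "Xs a"] supp_push_osum[of as \<phi> Xs] inj assms(4)
      X_monotone_less[OF assms(2)] by auto
qed

lemma bigtens_push_osum:
  assumes Xs: "\<forall>a<m. Phi_obj C (Xs a)" and \<phi>: "inj_fam m \<phi>" "X_monotone C m Xs \<phi>"
  shows "sorted_wrt (<) as \<Longrightarrow> \<forall>a\<in>set as. a < m \<Longrightarrow>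
    bigtens C (push_osum C \<phi> Xs as) = tens_list C (map (\<lambda>a. bigtens C (Xs a)) as)"
proof (induction as)
  case Nil
  then show ?case by (simp add: bigtens_def)
next
  case (Cons a as)
  have a: "a < m" and as: "\<forall>b\<in>set as. a < b \<and> b < m" using Cons.prems by auto
  have fin: "finite (supp C (Xs b))" and ob: "\<forall>i. Xs b i \<in> ob C" if "b < m" for b
    using Xs that unfolding Phi_obj_def by auto
  have "bigtens C (osum C (push C (\<phi> a) (Xs a)) (push_osum C \<phi> Xs as))
      = tn C (bigtens C (push C (\<phi> a) (Xs a))) (bigtens C (push_osum C \<phi> Xs as))"
    using supp_push_less_supp_push_osum[OF \<phi> a as] supp_push[OF inj_fam_inj[OF \<phi>(1) a]]
      supp_push_osum[of as \<phi> Xs] inj_fam_inj[OF \<phi>(1)] fin ob a as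
    by (intro bigtens_osum) (auto intro: push_ob push_osum_ob)
  moreover have "bigtens C (push C (\<phi> a) (Xs a)) = bigtens C (Xs a)"
    by (rule bigtens_push[OF inj_fam_inj[OF \<phi>(1) a] fin[OF a] X_monotone_mono[OF \<phi>(2) a]])
  ultimately show ?case using Cons by simp
qed

lemma msum_list_gen_iso_idm:
  assumes Xs: "\<forall>a<m. Phi_obj C (Xs a)"
    and \<phi>: "inj_fam m \<phi>" "X_monotone C m Xs \<phi>" and \<phi>': "inj_fam m \<phi>'" "X_monotone C m Xs \<phi>'"
  shows "sorted_wrt (<) as \<Longrightarrow> \<forall>a\<in>set as. a < m \<Longrightarrow>
    msum_list C (map (\<lambda>a. (push C (\<phi> a) (Xs a), push C (\<phi>' a) (Xs a), gen_iso C (\<phi>' a) (\<phi> a) (Xs a))) as)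
      = idm C (bigtens C (push_osum C \<phi> Xs as))"
proof (induction as)
  case Nil
  then show ?case by (simp add: bigtens_def)
next
  case (Cons a as)
  have a: "a < m" and as: "\<forall>b\<in>set as. a < b \<and> b < m" using Cons.prems by auto
  have fin: "finite (supp C (Xs b))" and ob: "\<forall>i. Xs b i \<in> ob C" if "b < m" for b
    using Xs that unfolding Phi_obj_def by auto
  have rearr: "rearr C (push C (\<psi> a) (Xs a)) (push_osum C \<psi> Xs as)
      = idm C (bigtens C (osum C (push C (\<psi> a) (Xs a)) (push_osum C \<psi> Xs as)))"
    if \<psi>: "inj_fam m \<psi>" "X_monotone C m Xs \<psi>" for \<psi>
    using supp_push_less_supp_push_osum[OF \<psi> a as] supp_push[OF inj_fam_inj[OF \<psi>(1) a]]
      supp_push_osum[of as \<psi> Xs] inj_fam_inj[OF \<psi>(1)] fin ob a as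
    by (intro rearr_idm) (auto intro: push_ob push_osum_ob)
  have bigtens: "bigtens C (osum C (push C (\<psi> a) (Xs a)) (push_osum C \<psi> Xs as))
      = tn C (bigtens C (Xs a)) (bigtens C (push_osum C \<phi> Xs as))"
    if \<psi>: "inj_fam m \<psi>" "X_monotone C m Xs \<psi>" for \<psi>
    using bigtens_push_osum[OF Xs \<psi>, of "a # as"] bigtens_push_osum[OF Xs \<phi>, of as] Cons.prems by simp
  have "gen_iso C (\<phi>' a) (\<phi> a) (Xs a) = idm C (bigtens C (Xs a))"
    unfolding gen_iso_def struct_iso_idm[OF Xs[rule_format, OF a] inj_fam_inj[OF \<phi>(1) a] X_monotone_mono[OF \<phi>(2) a]]
      struct_iso_idm[OF Xs[rule_format, OF a] inj_fam_inj[OF \<phi>'(1) a] X_monotone_mono[OF \<phi>'(2) a]]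
    using inv_mor_idm bigtens_ob[OF ob[OF a]] by simp
  moreover have "bigtens C (push_osum C \<phi> Xs as) \<in> ob C"
    using bigtens_ob push_osum_ob ob as by (metis (no_types, lifting))
  ultimately show ?case
    using Cons rearr[OF \<phi>] rearr[OF \<phi>'] bigtens[OF \<phi>] bigtens[OF \<phi>'] bigtens_ob[OF ob[OF a]] inv_mor_idm
    by (simp add: msum_def comp_def)
qed

end

lemma mult_add_less_mult_add: "(a :: nat) < a' \<Longrightarrow> j < B \<Longrightarrow> a * B + j < a' * B + j'"
proof -
  assume "a < a'" "j < B"
  then have "a * B + j < Suc a * B" by simp
  also have "\<dots> \<le> a' * B" using \<open>a < a'\<close> by (intro mult_le_mono1) simp
  finally show ?thesis by simp
qed

text \<open>For \<open>B\<close> bounding all supports, the entries \<open>j < B\<close> fill consecutive blocks of length \<open>B\<close>;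
  the remaining (unit) entries are interleaved injectively behind them.\<close>
definition block_inj :: "nat \<Rightarrow> nat \<Rightarrow> nat \<Rightarrow> nat \<Rightarrow> nat" where
  "block_inj m B a j = (if j < B then a * B + j else m * B + j * m + a)"

lemma mult_add_eq_mult_add_iff:
  "(j :: nat) < B \<Longrightarrow> j' < B \<Longrightarrow> a * B + j = a' * B + j' \<longleftrightarrow> a = a' \<and> j = j'"
  by (metis add_left_cancel linorder_neqE_nat mult_add_less_mult_add order_less_irrefl)

lemma inj_fam_block_inj: "inj_fam m (block_inj m B)"
  unfolding inj_fam_def
proof (rule inj_onI, clarsimp)
  fix a j a' j' assume a: "a < m" "a' < m" and eq: "block_inj m B a j = block_inj m B a' j'"
  have below: "a * B + j < m * B + k" if "a < m" "j < B" for a j k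
    using mult_add_less_mult_add[OF that, of 0] by simp
  consider "j < B" "j' < B" | "j < B" "\<not> j' < B" | "\<not> j < B" "j' < B" | "\<not> j < B" "\<not> j' < B"
    by blast
  then show "a = a' \<and> j = j'"
  proof cases
    case 1 with eq show ?thesis by (simp add: block_inj_def mult_add_eq_mult_add_iff)
  next
    case 2 with eq below[OF a(1) 2(1), of "j' * m + a'"] show ?thesis by (simp add: block_inj_def add.assoc)
  next
    case 3 with eq below[OF a(2) 3(2), of "j * m + a"] show ?thesis by (simp add: block_inj_def add.assoc)
  next
    case 4 with eq a show ?thesis by (simp add: block_inj_def mult_add_eq_mult_add_iff)
  qed
qed

lemma exists_X_monotone_inj_fam:
  assumes "\<forall>a<m. finite (supp C (Xs a))"
  shows "\<exists>\<phi>. inj_fam m \<phi> \<and> X_monotone C m Xs \<phi>"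
proof -
  have "finite (\<Union>a<m. supp C (Xs a))" using assms by auto
  then obtain B where B: "\<forall>x\<in>(\<Union>a<m. supp C (Xs a)). x < B"
    using finite_nat_set_iff_bounded by auto
  have "X_monotone C m Xs (block_inj m B)"
    unfolding X_monotone_def
  proof (intro allI impI)
    fix i i' j j' assume "i < m" "i' < m" and h: "(i < i' \<or> i = i' \<and> j < j') \<and> Xs i j \<noteq> un C \<and> Xs i' j' \<noteq> un C"
    then have "j < B" "j' < B" using B unfolding supp_def by auto
    with h show "block_inj m B i j < block_inj m B i' j'"
      unfolding block_inj_def using mult_add_less_mult_add[of i i' j B j'] by auto
  qed
  then show ?thesis using inj_fam_block_inj by blast
qed

theorem proposition2p12:
  fixes C :: "('o, 'm) pcat" and m :: nat and Xs :: "nat \<Rightarrow> nat \<Rightarrow> 'o"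
  assumes "permutative_cat C"
    and "\<forall>a<m. Phi_obj C (Xs a)"
  shows "(\<exists>\<phi>. inj_fam m \<phi> \<and> X_monotone C m Xs \<phi>) \<and>
         (\<forall>\<phi> \<phi>'. inj_fam m \<phi> \<and> X_monotone C m Xs \<phi> \<and> inj_fam m \<phi>' \<and> X_monotone C m Xs \<phi>' \<longrightarrow>
            bigtens C (push_fam C m \<phi> Xs) = bigtens C (push_fam C m \<phi>' Xs) \<and>
            gen_iso_fam C m \<phi>' \<phi> Xs = idm C (bigtens C (push_fam C m \<phi> Xs)))"
proof (intro conjI allI impI)
  interpret permutative C by (rule permutative.intro) (rule assms(1))
  show "\<exists>\<phi>. inj_fam m \<phi> \<and> X_monotone C m Xs \<phi>"
    using assms(2) by (intro exists_X_monotone_inj_fam) (simp add: Phi_obj_def)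
  fix \<phi> \<phi>' assume "inj_fam m \<phi> \<and> X_monotone C m Xs \<phi> \<and> inj_fam m \<phi>' \<and> X_monotone C m Xs \<phi>'"
  then have \<phi>: "inj_fam m \<phi>" "X_monotone C m Xs \<phi>" and \<phi>': "inj_fam m \<phi>'" "X_monotone C m Xs \<phi>'"
    by auto
  have upt: "sorted_wrt (<) [0..<m]" "\<forall>a\<in>set [0..<m]. a < m" by auto
  show "bigtens C (push_fam C m \<phi> Xs) = bigtens C (push_fam C m \<phi>' Xs)"
    unfolding push_fam_def bigtens_push_osum[OF assms(2) \<phi> upt] bigtens_push_osum[OF assms(2) \<phi>' upt] ..
  show "gen_iso_fam C m \<phi>' \<phi> Xs = idm C (bigtens C (push_fam C m \<phi> Xs))"
    unfolding push_fam_def gen_iso_fam_def by (rule msum_list_gen_iso_idm[OF assms(2) \<phi> \<phi>' upt])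
qed

end
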